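(* Let $\sigma\colon\mathbb{H}^3\to\mathbb{H}^3$ be the cyclic shift $\sigma(a,b,c)=(b,c,a)$, and let $m\ge1$. Suppose $x_1,\dots,x_{3m}\in\mathbb{H}^3$ and $w_1,\dots,w_{3m}\in\mathbb{R}$ satisfy: (1) $x_{m+i}=\sigma(x_i)$ for $i=1,\dots,2m$; (2) $w_{m+i}=w_i$ for $i=1,\dots,2m$; (3) $|x_i|^2=1$ for $i=1,\dots,m$; (4) the squared inner products $|\langle x_i,x_j\rangle|^2$, taken over all $i\in\{1,\dots,m\}$ together with all $j$ in any of the following ranges, are all equal: (i) $j=i+m$; (ii) $i<j\le m$; (iii) $i+m<j\le 2m$; (iv) $i+2m<j\le 3m$; (5) the matrix $\sum_{i=1}^{3m}w_ix_ix_i^\dagger$ has $(1,1)$ entry equal to $1$ and $(1,2)$ entry equal to $0$. Then $w_1=\cdots=w_{3m}=1/m$ and $\{x_1,\dots,x_{3m}\}$ is a tight simplex in $\mathbb{H}\mathbb{P}^2$.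
   Context: $\mathbb{H}$ denotes the quaternions; $\dagger$ is conjugate transpose and $\langle x,y\rangle=x^\dagger y$ on $\mathbb{H}^3$. $\mathbb{H}\mathbb{P}^{2}$ is the space of quaternionic lines in $\mathbb{H}^3$ (scalars acting on the right), points represented by unit vectors. A tight simplex of $N$ points in $\mathbb{H}\mathbb{P}^{2}$ is a set of $N$ distinct points $x_1,\dots,x_N$ with $|\langle x_i,x_j\rangle|^2=\frac{N-3}{3(N-1)}$ for all $i\ne j$. *)

theory Defs
  imports "HOL-Analysis.Analysis"
begin

datatype quat = Quat (qr: real) (qi: real) (qj: real) (qk: real)

instantiation quat :: "{comm_monoid_add, times, one, uminus}"
begin
definition "0 = Quat 0 0 0 0"
definition "1 = Quat 1 0 0 0"
definition "p + q = Quat (qr p + qr q) (qi p + qi q) (qj p + qj q) (qk p + qk q)"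
definition "- p = Quat (- qr p) (- qi p) (- qj p) (- qk p)"
text \<open>Hamilton product, with i^2 = j^2 = k^2 = ijk = -1.\<close>
definition "p * q = Quat
   (qr p * qr q - qi p * qi q - qj p * qj q - qk p * qk q)
   (qr p * qi q + qi p * qr q + qj p * qk q - qk p * qj q)
   (qr p * qj q - qi p * qk q + qj p * qr q + qk p * qi q)
   (qr p * qk q + qi p * qj q - qj p * qi q + qk p * qr q)"
instance
  by standard (simp_all add: zero_quat_def plus_quat_def algebra_simps)
end

definition qconj :: "quat \<Rightarrow> quat" where
  "qconj p = Quat (qr p) (- qi p) (- qj p) (- qk p)"

definition qnormsq :: "quat \<Rightarrow> real" where
  "qnormsq p = (qr p)\<^sup>2 + (qi p)\<^sup>2 + (qj p)\<^sup>2 + (qk p)\<^sup>2"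

definition qscale :: "real \<Rightarrow> quat \<Rightarrow> quat" where
  "qscale c p = Quat (c * qr p) (c * qi p) (c * qj p) (c * qk p)"

type_synonym hvec = "quat ^ 3"

definition hinner :: "hvec \<Rightarrow> hvec \<Rightarrow> quat" where
  "hinner x y = (\<Sum>k\<in>UNIV. qconj (x $ k) * y $ k)"

definition hip2 :: "hvec \<Rightarrow> hvec \<Rightarrow> real" where
  "hip2 x y = qnormsq (hinner x y)"

definition hnormsq :: "hvec \<Rightarrow> real" where
  "hnormsq x = (\<Sum>k\<in>UNIV. qnormsq (x $ k))"

definition hshift :: "hvec \<Rightarrow> hvec" where
  "hshift x = (\<chi> k. if k = 1 then x $ 2 else if k = 2 then x $ 3 else x $ 1)"

text \<open>The quaternionic line through x (scalars acting on the right): the point of HP^2 represented by x.\<close>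
definition hline :: "hvec \<Rightarrow> hvec set" where
  "hline x = {(\<chi> k. x $ k * q) | q. True}"

definition outer_entry :: "hvec \<Rightarrow> 3 \<Rightarrow> 3 \<Rightarrow> quat" where
  "outer_entry x a b = x $ a * qconj (x $ b)"

definition tight_simplex :: "nat \<Rightarrow> (nat \<Rightarrow> hvec) \<Rightarrow> bool" where
  "tight_simplex N x \<longleftrightarrow>
     (\<forall>i\<in>{1..N}. hnormsq (x i) = 1) \<and>
     (\<forall>i\<in>{1..N}. \<forall>j\<in>{1..N}. i \<noteq> j \<longrightarrow> hline (x i) \<noteq> hline (x j)) \<and>
     (\<forall>i\<in>{1..N}. \<forall>j\<in>{1..N}. i \<noteq> j \<longrightarrow>
        hip2 (x i) (x j) = (real N - 3) / (3 * (real N - 1)))"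

end

theory Submission
  imports Defs
begin

text \<open>
  Since the 3m points are the orbits of x_1, ..., x_m under the cyclic shift \<sigma>, the frame
  operator \<Sum>_j w_j x_j x_j^\<dagger> is circulant: for unit vectors its diagonal entries all equal
  \<Sum>_{i\<le>m} w_i and its off-diagonal entries are one quaternion and its conjugate.  The two
  prescribed entries therefore make it the identity, so \<Sum>_j w_j |\<langle>y,x_j\<rangle>|^2 = |y|^2 for
  every y, and taking the trace gives \<Sum>_j w_j = 3.  Transporting the equiangularity
  hypotheses along \<sigma> shows that all 3m points are pairwise at the same angle c.  Testing the
  frame identity at y = x_k gives w_k + c (3 - w_k) = 1, so all weights coincide; they sum to 3,
  hence equal 1/m, and then c = (3m - 3)/(3(3m - 1)).
\<close>

section \<open>Quaternion algebra\<close>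

instantiation quat :: minus
begin
definition minus_quat :: "quat \<Rightarrow> quat \<Rightarrow> quat" where "p - q = p + - (q::quat)"
instance ..
end

lemma quat_eqI: "qr p = qr q \<Longrightarrow> qi p = qi q \<Longrightarrow> qj p = qj q \<Longrightarrow> qk p = qk q \<Longrightarrow> p = q"
  by (cases p; cases q) auto

lemmas quat_ops_defs =
  zero_quat_def one_quat_def plus_quat_def uminus_quat_def times_quat_def minus_quat_def

instance quat :: ring_1
  by standard (auto intro!: quat_eqI simp: quat_ops_defs algebra_simps)

instantiation quat :: real_algebra_1
begin
definition scaleR_quat :: "real \<Rightarrow> quat \<Rightarrow> quat" where "scaleR_quat = qscale"
instance
  by standard (auto intro!: quat_eqI simp: scaleR_quat_def qscale_def quat_ops_defs algebra_simps)
end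

lemma of_real_mult_commute: "of_real r * a = a * (of_real r :: 'a::real_algebra_1)"
  by (simp add: of_real_def)

lemma of_real_quat: "of_real c = Quat c 0 0 0"
  by (simp add: of_real_def scaleR_quat_def qscale_def one_quat_def)

lemma qr_of_real [simp]: "qr (of_real c) = c"
  by (simp add: of_real_quat)

lemma qr_scaleR [simp]: "qr (c *\<^sub>R p) = c * qr p"
  by (simp add: scaleR_quat_def qscale_def)

lemma qr_sum: "qr (sum f A) = (\<Sum>a\<in>A. qr (f a))"
  by (induction A rule: infinite_finite_induct) (simp_all add: quat_ops_defs)

lemma qconj_mult: "qconj (p * q) = qconj q * qconj p"
  by (rule quat_eqI) (simp_all add: qconj_def quat_ops_defs algebra_simps)

lemma qconj_zero [simp]: "qconj 0 = 0"
  by (simp add: qconj_def zero_quat_def)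

lemma qconj_add: "qconj (p + q) = qconj p + qconj q"
  by (rule quat_eqI) (simp_all add: qconj_def quat_ops_defs)

lemma qconj_sum: "qconj (sum f A) = (\<Sum>a\<in>A. qconj (f a))"
  by (induction A rule: infinite_finite_induct) (simp_all add: qconj_add)

lemma qconj_scaleR: "qconj (c *\<^sub>R p) = c *\<^sub>R qconj p"
  by (simp add: qconj_def scaleR_quat_def qscale_def)

lemma qconj_qconj [simp]: "qconj (qconj p) = p"
  by (simp add: qconj_def)

lemma mult_qconj: "p * qconj p = of_real (qnormsq p)"
  by (rule quat_eqI) (simp_all add: qconj_def quat_ops_defs of_real_quat qnormsq_def power2_eq_square)

lemma qconj_mult_self: "qconj p * p = of_real (qnormsq p)"
  by (rule quat_eqI) (simp_all add: qconj_def quat_ops_defs of_real_quat qnormsq_def power2_eq_square)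

lemma qnormsq_qconj [simp]: "qnormsq (qconj p) = qnormsq p"
  by (simp add: qconj_def qnormsq_def)

lemma qnormsq_of_real [simp]: "qnormsq (of_real c) = c\<^sup>2"
  by (simp add: qnormsq_def of_real_quat)

lemma qnormsq_mult: "qnormsq (p * q) = qnormsq p * qnormsq q"
proof -
  have "of_real (qnormsq (p * q)) = p * (q * qconj q) * qconj p"
    by (simp add: mult_qconj [symmetric] qconj_mult mult.assoc)
  also have "\<dots> = p * qconj p * of_real (qnormsq q)"
    by (metis mult_qconj mult.assoc of_real_mult_commute)
  also have "\<dots> = of_real (qnormsq p * qnormsq q)"
    by (simp only: mult_qconj of_real_mult)
  finally show ?thesis
    by (simp only: of_real_eq_iff)
qed

lemma hinner_commute: "hinner z y = qconj (hinner y z)"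
  by (simp add: hinner_def qconj_sum qconj_mult)

lemma hip2_commute: "hip2 z y = hip2 y z"
  unfolding hip2_def by (metis hinner_commute qnormsq_qconj)

lemma hinner_self: "hinner y y = of_real (hnormsq y)"
  by (simp add: hinner_def hnormsq_def qconj_mult_self)

lemma hip2_self: "hip2 y y = (hnormsq y)\<^sup>2"
  by (simp add: hip2_def hinner_self)

lemma hip2_quadratic_form:
  "hip2 y z = qr (\<Sum>a\<in>UNIV. \<Sum>b\<in>UNIV. qconj (y $ a) * outer_entry z a b * y $ b)"
proof -
  have "of_real (hip2 y z) = hinner y z * qconj (hinner y z)"
    by (simp add: hip2_def mult_qconj)
  also have "\<dots> = (\<Sum>a\<in>UNIV. qconj (y $ a) * z $ a) * (\<Sum>b\<in>UNIV. qconj (z $ b) * y $ b)"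
    by (simp add: hinner_def qconj_sum qconj_mult)
  also have "\<dots> = (\<Sum>a\<in>UNIV. \<Sum>b\<in>UNIV. qconj (y $ a) * outer_entry z a b * y $ b)"
    by (simp add: sum_product outer_entry_def mult.assoc)
  finally show ?thesis
    by (metis qr_of_real)
qed

lemma hip2_eq_1_if_hline_eq:
  assumes "hnormsq a = 1" "hnormsq b = 1" "hline a = hline b"
  shows "hip2 a b = 1"
proof -
  have "a \<in> hline a"
    unfolding hline_def by (rule CollectI, rule exI [of _ 1]) (simp add: vec_eq_iff)
  then obtain q where q: "a = (\<chi> k. b $ k * q)"
    using assms(3) unfolding hline_def by auto
  have "hinner b a = of_real (hnormsq b) * q"
    by (simp add: q hinner_def hnormsq_def sum_distrib_right qconj_mult_self mult.assoc [symmetric])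
  moreover have "hnormsq a = hnormsq b * qnormsq q"
    by (simp add: q hnormsq_def qnormsq_mult sum_distrib_right)
  ultimately have "hip2 b a = 1"
    using assms by (simp add: hip2_def)
  then show ?thesis
    by (simp add: hip2_commute)
qed

lemma hshift_nth [simp]: "hshift z $ 1 = z $ 2" "hshift z $ 2 = z $ 3" "hshift z $ 3 = z $ 1"
  by (simp_all add: hshift_def)

lemma hinner_hshift [simp]: "hinner (hshift a) (hshift b) = hinner a b"
  by (simp add: hinner_def sum_3 add_ac)

lemma hnormsq_hshift [simp]: "hnormsq (hshift a) = hnormsq a"
  by (simp add: hnormsq_def sum_3 add_ac)

lemma hip2_hshift [simp]: "hip2 (hshift a) (hshift b) = hip2 a b"
  by (simp add: hip2_def)

lemma hnormsq_hshift_funpow [simp]: "hnormsq ((hshift ^^ s) a) = hnormsq a"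
  by (induction s) simp_all

lemma hip2_hshift_funpow [simp]: "hip2 ((hshift ^^ s) a) ((hshift ^^ s) b) = hip2 a b"
  by (induction s) simp_all

lemma hshift_funpow_mod: "hshift ^^ n = hshift ^^ (n mod 3)"
proof -
  have "hshift ^^ 3 = id"
    by (rule ext) (simp add: vec_eq_iff forall_3 numeral_3_eq_3)
  then have "hshift ^^ (3 * k) = id" for k
    by (simp add: funpow_mult [symmetric])
  then show ?thesis
    by (metis div_mult_mod_eq funpow_add id_comp mult.commute)
qed

lemma hip2_hshift_funpow_left:
  "hip2 ((hshift ^^ s) a) ((hshift ^^ t) b) = hip2 a ((hshift ^^ ((t + 2 * s) mod 3)) b)"
proof -
  have "hip2 ((hshift ^^ s) a) ((hshift ^^ t) b)
      = hip2 ((hshift ^^ (2 * s + s)) a) ((hshift ^^ (2 * s + t)) b)"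
    by (simp only: funpow_add comp_apply hip2_hshift_funpow)
  moreover have "hshift ^^ (2 * s + s) = id"
    by (subst hshift_funpow_mod) simp
  moreover have "hshift ^^ (2 * s + t) = hshift ^^ ((t + 2 * s) mod 3)"
    by (subst hshift_funpow_mod) (simp add: add.commute)
  ultimately show ?thesis
    by simp
qed

lemma hip2_hshift_funpow_swap:
  "hip2 a ((hshift ^^ d) b) = hip2 b ((hshift ^^ (2 * d mod 3)) a)"
  using hip2_hshift_funpow_left [of d b 0 a] by (simp add: hip2_commute)

section \<open>Frame operators\<close>

definition frame_operator :: "'a set \<Rightarrow> ('a \<Rightarrow> real) \<Rightarrow> ('a \<Rightarrow> hvec) \<Rightarrow> 3 \<Rightarrow> 3 \<Rightarrow> quat" where
  "frame_operator I w x a b = (\<Sum>i\<in>I. qscale (w i) (outer_entry (x i) a b))"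

lemma sum_weighted_hip2_eq_frame_operator:
  "(\<Sum>i\<in>I. w i * hip2 y (x i))
     = qr (\<Sum>a\<in>UNIV. \<Sum>b\<in>UNIV. qconj (y $ a) * frame_operator I w x a b * y $ b)"
proof -
  have "w i * hip2 y (x i)
      = qr (\<Sum>a\<in>UNIV. \<Sum>b\<in>UNIV. qconj (y $ a) * (w i *\<^sub>R outer_entry (x i) a b) * y $ b)" for i
    by (simp add: hip2_quadratic_form qr_sum sum_distrib_left)
  then show ?thesis
    by (simp add: frame_operator_def scaleR_quat_def [symmetric] qr_sum sum_distrib_left
        sum_distrib_right sum.swap [of _ I])
qed

lemma frame_operator_trace:
  "(\<Sum>a\<in>UNIV. frame_operator I w x a a) = of_real (\<Sum>i\<in>I. w i * hnormsq (x i))"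
  by (simp add: frame_operator_def outer_entry_def mult_qconj hnormsq_def scaleR_quat_def [symmetric]
      scaleR_conv_of_real sum_distrib_left sum.swap [of _ I])

lemma parseval_of_frame_operator_eq_id:
  assumes "frame_operator I w x = (\<lambda>a b. if a = b then 1 else 0)"
  shows "(\<Sum>i\<in>I. w i * hip2 y (x i)) = hnormsq y"
proof -
  have "qconj (y $ a) * frame_operator I w x a b * y $ b
      = (if a = b then of_real (qnormsq (y $ a)) else 0)" for a b
    by (simp add: assms qconj_mult_self)
  then show ?thesis
    by (simp add: sum_weighted_hip2_eq_frame_operator qr_sum hnormsq_def)
qed

lemma weight_sum_of_frame_operator_eq_id:
  assumes "frame_operator I w x = (\<lambda>a b. if a = b then 1 else 0)"
  shows "(\<Sum>i\<in>I. w i * hnormsq (x i)) = 3"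
  using frame_operator_trace [of I w x]
  by (simp add: assms del: of_real_sum of_real_mult) (metis of_real_eq_iff of_real_numeral)

lemma equiangular_frame_operator_eq_id:
  assumes frame: "frame_operator I w x = (\<lambda>a b. if a = b then 1 else 0)"
    and unit: "\<forall>i\<in>I. hnormsq (x i) = 1"
    and equi: "\<forall>i\<in>I. \<forall>j\<in>I. i \<noteq> j \<longrightarrow> hip2 (x i) (x j) = c"
  shows "(\<forall>i\<in>I. w i = 3 / card I) \<and> c = (real (card I) - 3) / (3 * (real (card I) - 1))"
proof -
  have W: "(\<Sum>j\<in>I. w j) = 3"
    using weight_sum_of_frame_operator_eq_id [OF frame] unit by simp
  then have "finite I" "I \<noteq> {}"
    by (metis sum.infinite zero_neq_numeral, metis sum.empty zero_neq_numeral)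
  have balance: "w i + c * (3 - w i) = 1" if "i \<in> I" for i
  proof -
    have off_diagonal: "(\<Sum>j\<in>I - {i}. w j * hip2 (x i) (x j)) = c * (\<Sum>j\<in>I - {i}. w j)"
      unfolding sum_distrib_left using equi that by (intro sum.cong) auto
    have "1 = (\<Sum>j\<in>I. w j * hip2 (x i) (x j))"
      using parseval_of_frame_operator_eq_id [OF frame, of "x i"] unit that by simp
    also have "\<dots> = w i * hip2 (x i) (x i) + (\<Sum>j\<in>I - {i}. w j * hip2 (x i) (x j))"
      using \<open>finite I\<close> that by (rule sum.remove)
    also have "\<dots> = w i + c * (3 - w i)"
      using unit W \<open>finite I\<close> that by (simp add: off_diagonal hip2_self sum_diff1)
    finally show ?thesis ..
  qed
  obtain i0 where "i0 \<in> I"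
    using \<open>I \<noteq> {}\<close> by blast
  then have "c \<noteq> 1"
    using balance by fastforce
  define \<omega> where "\<omega> = (1 - 3 * c) / (1 - c)"
  have w: "w i = \<omega>" if "i \<in> I" for i
    using balance [OF that] \<open>c \<noteq> 1\<close> by (simp add: \<omega>_def field_simps)
  define n where "n = real (card I)"
  have "n > 0"
    using \<open>finite I\<close> \<open>I \<noteq> {}\<close> by (simp add: n_def card_gt_0_iff)
  have "n * \<omega> = 3"
    using W w by (simp add: n_def)
  then have \<omega>: "\<omega> = 3 / n"
    using \<open>n > 0\<close> by (simp add: field_simps)
  have "3 + c * (3 * n - 3) = n"
    using balance [OF \<open>i0 \<in> I\<close>] w [OF \<open>i0 \<in> I\<close>] \<open>n > 0\<close> by (simp add: \<omega> field_simps)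
  \<comment> \<open>So a single vector never has the identity as frame operator; no bound on card I is needed.\<close>
  then have "n \<noteq> 1" and "c * (3 * (n - 1)) = n - 3"
    by (auto simp: algebra_simps)
  then have "c = (n - 3) / (3 * (n - 1))"
    by (simp add: field_simps)
  with w \<omega> show ?thesis
    by (simp add: n_def)
qed

lemma tight_simplexI:
  assumes "\<forall>i\<in>{1..N}. hnormsq (x i) = 1"
    and "\<forall>i\<in>{1..N}. \<forall>j\<in>{1..N}. i \<noteq> j \<longrightarrow> hip2 (x i) (x j) = (real N - 3) / (3 * (real N - 1))"
  shows "tight_simplex N x"
  unfolding tight_simplex_def
proof (intro conjI ballI impI)
  fix i j
  assume ij: "i \<in> {1..N}" "j \<in> {1..N}" "i \<noteq> j"
  then have "N \<ge> 2"
    by auto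
  then have "(real N - 3) / (3 * (real N - 1)) < 1"
    by (simp add: field_simps)
  then have "hip2 (x i) (x j) < 1"
    using assms(2) ij by simp
  then show "hline (x i) \<noteq> hline (x j)"
    using hip2_eq_1_if_hline_eq assms(1) ij by fastforce
qed (use assms in auto)

section \<open>Families closed under the cyclic shift\<close>

lemma bij_betw_thirds:
  fixes m :: nat
  shows "bij_betw (\<lambda>(s, i). s * m + i) ({..<3} \<times> {1..m}) {1..3 * m}"
proof (rule bij_betw_byWitness [where f' = "\<lambda>k. ((k - 1) div m, (k - 1) mod m + 1)"])
  have "(s * m + i - 1) div m = s \<and> (s * m + i - 1) mod m + 1 = i" if i: "i \<in> {1..m}" for s i
  proof -
    obtain j where "i = Suc j" "j < m"
      using i by (cases i) auto
    then show ?thesis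
      by simp
  qed
  then show "\<forall>a\<in>{..<3} \<times> {1..m}. (\<lambda>k. ((k - 1) div m, (k - 1) mod m + 1)) (case a of (s, i) \<Rightarrow> s * m + i) = a"
    by auto
  show "\<forall>k\<in>{1..3 * m}. (case ((k - 1) div m, (k - 1) mod m + 1) of (s, i) \<Rightarrow> s * m + i) = k"
    by (simp add: mult.commute [of _ m])
  show "(\<lambda>(s, i). s * m + i) ` ({..<3} \<times> {1..m}) \<subseteq> {1..3 * m}"
  proof clarify
    fix s i :: nat
    assume "s < 3" "i \<in> {1..m}"
    then have "s * m + i \<le> 2 * m + m"
      by (intro add_mono mult_le_mono1) auto
    then show "s * m + i \<in> {1..3 * m}"
      using \<open>i \<in> {1..m}\<close> by auto
  qed
  show "(\<lambda>k. ((k - 1) div m, (k - 1) mod m + 1)) ` {1..3 * m} \<subseteq> {..<3} \<times> {1..m}"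
    by (auto simp: less_mult_imp_div_less Suc_leI)
qed

lemma thirds_cases:
  fixes k m :: nat
  assumes "k \<in> {1..3 * m}"
  obtains s i where "s < 3" "i \<in> {1..m}" "k = s * m + i"
proof -
  have "k \<in> (\<lambda>(s, i). s * m + i) ` ({..<3} \<times> {1..m})"
    using bij_betw_imp_surj_on [OF bij_betw_thirds [of m]] assms by simp
  then show thesis
    using that by (auto simp: image_iff)
qed

lemma shifted_family_funpow:
  assumes "\<forall>i\<in>{1..2 * m}. f (m + i) = g (f i)"
  shows "s < 3 \<Longrightarrow> i \<in> {1..m} \<Longrightarrow> f (s * m + i) = (g ^^ s) (f i)"
proof (induction s)
  case (Suc s)
  then have "s * m \<le> m"
    using mult_le_mono1 [of s 1 m] by simp
  moreover have "1 \<le> i" "i \<le> m"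
    using Suc.prems by auto
  ultimately have "s * m + i \<in> {1..2 * m}"
    unfolding atLeastAtMost_iff by linarith
  then show ?case
    using assms Suc by (simp add: add.assoc)
qed simp

definition cyclic_outer_sum :: "hvec \<Rightarrow> quat" where
  "cyclic_outer_sum z = outer_entry z 1 2 + outer_entry z 2 3 + outer_entry z 3 1"

lemma sum_outer_entry_hshift_orbit:
  "(\<Sum>s<3. outer_entry ((hshift ^^ s) z) a b) =
     (if a = b then of_real (hnormsq z)
      else if b = a + 1 then cyclic_outer_sum z else qconj (cyclic_outer_sum z))"
proof -
  have "(\<Sum>s<3. outer_entry ((hshift ^^ s) z) a b)
      = outer_entry z a b + outer_entry (hshift z) a b + outer_entry (hshift (hshift z)) a b"
    by (simp add: numeral_3_eq_3 numeral_2_eq_2)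
  then show ?thesis
    using exhaust_3 [of a] exhaust_3 [of b]
    by (elim disjE) (simp_all add: outer_entry_def cyclic_outer_sum_def hnormsq_def sum_3
        qconj_add qconj_mult mult_qconj add_ac)
qed

lemma frame_operator_cyclic_family:
  assumes x: "\<forall>s<3. \<forall>i\<in>{1..m}. x (s * m + i) = (hshift ^^ s) (x i)"
    and w: "\<forall>s<3. \<forall>i\<in>{1..m}. w (s * m + i) = w i"
  shows "frame_operator {1..3 * m} w x a b
    = (\<Sum>i=1..m. w i *\<^sub>R (\<Sum>s<3. outer_entry ((hshift ^^ s) (x i)) a b))"
proof -
  have "frame_operator {1..3 * m} w x a b
      = (\<Sum>(s, i)\<in>{..<3} \<times> {1..m}. w (s * m + i) *\<^sub>R outer_entry (x (s * m + i)) a b)"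
    unfolding frame_operator_def scaleR_quat_def [symmetric]
    using sum.reindex_bij_betw [OF bij_betw_thirds [of m], symmetric] by (simp add: split_def)
  also have "\<dots> = (\<Sum>i=1..m. w i *\<^sub>R (\<Sum>s<3. outer_entry ((hshift ^^ s) (x i)) a b))"
    using x w by (simp add: sum.cartesian_product [symmetric] sum.swap [of _ "{..<3}"]
        scaleR_sum_right)
  finally show ?thesis .
qed

lemma frame_operator_cyclic_family_eq_id:
  assumes x: "\<forall>s<3. \<forall>i\<in>{1..m}. x (s * m + i) = (hshift ^^ s) (x i)"
    and w: "\<forall>s<3. \<forall>i\<in>{1..m}. w (s * m + i) = w i"
    and unit: "\<forall>i\<in>{1..m}. hnormsq (x i) = 1"
    and entry11: "frame_operator {1..3 * m} w x 1 1 = 1"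
    and entry12: "frame_operator {1..3 * m} w x 1 2 = 0"
  shows "frame_operator {1..3 * m} w x = (\<lambda>a b. if a = b then 1 else 0)"
proof -
  define S where "S = (\<Sum>i=1..m. w i *\<^sub>R cyclic_outer_sum (x i))"
  have F: "frame_operator {1..3 * m} w x a b
      = (if a = b then of_real (\<Sum>i=1..m. w i) else if b = a + 1 then S else qconj S)" for a b
  proof -
    have "(\<Sum>i=1..m. w i *\<^sub>R of_real (hnormsq (x i))) = (of_real (\<Sum>i=1..m. w i) :: quat)"
      using unit by (simp add: scaleR_conv_of_real)
    then show ?thesis
      unfolding frame_operator_cyclic_family [OF x w] sum_outer_entry_hshift_orbit S_def
      by (simp add: qconj_sum qconj_scaleR)
  qed
  have "(\<Sum>i=1..m. w i) = 1"
    using entry11 F [of 1 1] by (simp del: of_real_sum)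
  moreover have "S = 0"
    using entry12 F [of 1 2] by simp
  ultimately show ?thesis
    unfolding fun_eq_iff F by simp
qed

lemma hshift_orbits_equiangular:
  fixes i i' d :: nat
  assumes orbits: "\<forall>i\<in>{1..m}. \<forall>i'\<in>{1..m}. \<forall>d<3.
      i < i' \<or> (i = i' \<and> d = 1) \<longrightarrow> hip2 (y i) ((hshift ^^ d) (y i')) = c"
    and "i \<in> {1..m}" "i' \<in> {1..m}" "d < 3" "d \<noteq> 0 \<or> i \<noteq> i'"
  shows "hip2 (y i) ((hshift ^^ d) (y i')) = c"
proof -
  have "d = 0 \<or> d = 1 \<or> d = 2"
    using \<open>d < 3\<close> by presburger
  then consider "i < i' \<or> (i = i' \<and> d = 1)" | "i = i'" "d = 2" | "i' < i"
    using \<open>d \<noteq> 0 \<or> i \<noteq> i'\<close> by (metis linorder_neqE_nat)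
  then show ?thesis
  proof cases
    case 1
    then show ?thesis
      using orbits \<open>i \<in> {1..m}\<close> \<open>i' \<in> {1..m}\<close> \<open>d < 3\<close> by blast
  next
    case 2
    have "hip2 (y i) ((hshift ^^ 1) (y i)) = c"
      using orbits [rule_format, of i i 1] \<open>i \<in> {1..m}\<close> by simp
    then show ?thesis
      using 2 hip2_hshift_funpow_swap [of "y i" 2 "y i"] by simp
  next
    case 3
    have "2 * d mod 3 < 3"
      by simp
    then have "hip2 (y i') ((hshift ^^ (2 * d mod 3)) (y i)) = c"
      using orbits \<open>i \<in> {1..m}\<close> \<open>i' \<in> {1..m}\<close> 3 by blast
    then show ?thesis
      using hip2_hshift_funpow_swap [of "y i" d "y i'"] by simp
  qed
qed

lemma cyclic_family_equiangular:
  assumes x: "\<forall>s<3. \<forall>i\<in>{1..m}. x (s * m + i) = (hshift ^^ s) (x i)"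
    and equi: "\<forall>i\<in>{1..m}. \<forall>j. (j = i + m \<or> (i < j \<and> j \<le> m) \<or> (i + m < j \<and> j \<le> 2 * m)
      \<or> (i + 2 * m < j \<and> j \<le> 3 * m)) \<longrightarrow> hip2 (x i) (x j) = c"
  shows "\<forall>k\<in>{1..3 * m}. \<forall>j\<in>{1..3 * m}. k \<noteq> j \<longrightarrow> hip2 (x k) (x j) = c"
proof (intro ballI impI)
  have orbits: "\<forall>i\<in>{1..m}. \<forall>i'\<in>{1..m}. \<forall>d<3.
      i < i' \<or> (i = i' \<and> d = 1) \<longrightarrow> hip2 (x i) ((hshift ^^ d) (x i')) = c"
  proof (intro ballI allI impI)
    fix i i' d :: nat
    assume "i \<in> {1..m}" "i' \<in> {1..m}" "d < 3" "i < i' \<or> (i = i' \<and> d = 1)"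
    then have "d * m + i' = i + m \<or> (i < d * m + i' \<and> d * m + i' \<le> m)
        \<or> (i + m < d * m + i' \<and> d * m + i' \<le> 2 * m) \<or> (i + 2 * m < d * m + i' \<and> d * m + i' \<le> 3 * m)"
      by (auto simp: less_Suc_eq numeral_3_eq_3 numeral_2_eq_2)
    then show "hip2 (x i) ((hshift ^^ d) (x i')) = c"
      using equi x \<open>i \<in> {1..m}\<close> \<open>i' \<in> {1..m}\<close> \<open>d < 3\<close> by metis
  qed
  fix k j
  assume "k \<in> {1..3 * m}" "j \<in> {1..3 * m}" "k \<noteq> j"
  obtain s i t i' where "s < 3" "i \<in> {1..m}" "k = s * m + i"
      and "t < 3" "i' \<in> {1..m}" "j = t * m + i'"
    using \<open>k \<in> {1..3 * m}\<close> \<open>j \<in> {1..3 * m}\<close> by (elim thirds_cases)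
  moreover have "(t + 2 * s) mod 3 = 0 \<Longrightarrow> t = s"
    using \<open>s < 3\<close> \<open>t < 3\<close> by presburger
  ultimately have "(t + 2 * s) mod 3 \<noteq> 0 \<or> i \<noteq> i'"
    using \<open>k \<noteq> j\<close> by auto
  with \<open>s < 3\<close> \<open>t < 3\<close> \<open>i \<in> {1..m}\<close> \<open>i' \<in> {1..m}\<close> \<open>k = s * m + i\<close> \<open>j = t * m + i'\<close>
  show "hip2 (x k) (x j) = c"
    using hshift_orbits_equiangular [OF orbits, of i i' "(t + 2 * s) mod 3"] x
    by (simp add: hip2_hshift_funpow_left)
qed

theorem proposition4p6:
  fixes m :: nat and x :: "nat \<Rightarrow> hvec" and w :: "nat \<Rightarrow> real"
  assumes m: "m \<ge> 1"
    and shift: "\<forall>i\<in>{1..2*m}. x (m + i) = hshift (x i)"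
    and wshift: "\<forall>i\<in>{1..2*m}. w (m + i) = w i"
    and unit: "\<forall>i\<in>{1..m}. hnormsq (x i) = 1"
    and equi: "\<exists>c. \<forall>i\<in>{1..m}. \<forall>j.
                 (j = i + m \<or> (i < j \<and> j \<le> m) \<or> (i + m < j \<and> j \<le> 2*m)
                   \<or> (i + 2*m < j \<and> j \<le> 3*m)) \<longrightarrow> hip2 (x i) (x j) = c"
    and frame11: "(\<Sum>i=1..3*m. qscale (w i) (outer_entry (x i) 1 1)) = 1"
    and frame12: "(\<Sum>i=1..3*m. qscale (w i) (outer_entry (x i) 1 2)) = 0"
  shows "(\<forall>i\<in>{1..3*m}. w i = 1 / real m) \<and> tight_simplex (3*m) x"
proof -
  have x_cyclic: "\<forall>s<3. \<forall>i\<in>{1..m}. x (s * m + i) = (hshift ^^ s) (x i)"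
    using shifted_family_funpow [OF shift] by blast
  have w_cyclic: "\<forall>s<3. \<forall>i\<in>{1..m}. w (s * m + i) = w i"
    using shifted_family_funpow [of m w id] wshift by simp
  have frame: "frame_operator {1..3 * m} w x = (\<lambda>a b. if a = b then 1 else 0)"
    using frame_operator_cyclic_family_eq_id [OF x_cyclic w_cyclic unit] frame11 frame12
    by (simp add: frame_operator_def)
  have unit_all: "\<forall>k\<in>{1..3 * m}. hnormsq (x k) = 1"
  proof
    fix k
    assume "k \<in> {1..3 * m}"
    then obtain s i where "s < 3" "i \<in> {1..m}" "k = s * m + i"
      by (rule thirds_cases)
    then show "hnormsq (x k) = 1"
      using unit x_cyclic by simp
  qed
  obtain c where pairs: "\<forall>k\<in>{1..3 * m}. \<forall>j\<in>{1..3 * m}. k \<noteq> j \<longrightarrow> hip2 (x k) (x j) = c"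
    using equi by (elim exE) (rule that [OF cyclic_family_equiangular [OF x_cyclic]])
  then have "(\<forall>k\<in>{1..3 * m}. w k = 3 / real (3 * m))
      \<and> c = (real (3 * m) - 3) / (3 * (real (3 * m) - 1))"
    using equiangular_frame_operator_eq_id [OF frame unit_all pairs] by simp
  then show ?thesis
    using unit_all pairs by (auto intro!: tight_simplexI)
qed

end
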